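(* Let $k$ be an odd positive integer and $\mu, n$ positive integers such that $k^4\mu^4 n^4 - 16k(4\mu^2+n^2) = s^2$ for some integer $s$. Then \[ (5k\mu^2 - 4)(5kn^2 - 16) \leq 189. \] *)

theory Defs
  imports Main
begin

end

theory Submission
  imports Defs
begin

(* Put a = k \<mu>^2 and b = k n^2. The hypothesis says that P^2 - E is a square s^2, where
   P = a b and E = 16 (4 a + b); hence d = P - |s| satisfies d (2 P - d) = E with 1 \<le> d \<le> P.
   If d \<ge> 10, then E \<ge> 10 (2 P - 10), which rearranges to (5 a - 4) (5 b - 16) \<le> 189.
   Otherwise d = 2 h is even with 1 \<le> h \<le> 4, and the relation becomes
   (h a - 4) (h b - 16) = h^3 + 64 with k dividing h^2. As k is odd, (h, k) is one of six
   pairs, and for each of them a finite search over \<mu> and n shows there is no solution. *)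

lemma parabola_mono:
  fixes c d P :: "'a::linordered_idom"
  assumes "c \<le> d" "c + d \<le> 2 * P"
  shows "c * (2 * P - c) \<le> d * (2 * P - d)"
proof -
  have "d * (2 * P - d) - c * (2 * P - c) = (d - c) * (2 * P - c - d)"
    by (simp add: algebra_simps)
  also have "\<dots> \<ge> 0"
    using assms by simp
  finally show ?thesis by simp
qed

lemma square_root_gap:
  fixes P E s :: int
  assumes "0 < P" "0 < E" "P^2 - E = s^2"
  obtains d where "1 \<le> d" "d \<le> P" "d * (2 * P - d) = E"
proof
  have "\<bar>s\<bar>^2 < P^2"
    using assms(2,3) by simp
  then have "\<bar>s\<bar> < P"
    using assms(1) by (simp add: power2_less_imp_less)
  then show "1 \<le> P - \<bar>s\<bar>" "P - \<bar>s\<bar> \<le> P"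
    by simp_all
  have "(P - \<bar>s\<bar>) * (2 * P - (P - \<bar>s\<bar>)) = P^2 - \<bar>s\<bar>^2"
    by (simp add: algebra_simps power2_eq_square)
  then show "(P - \<bar>s\<bar>) * (2 * P - (P - \<bar>s\<bar>)) = E"
    using assms(3) by simp
qed

lemma square_condition_bound_or_small_gap:
  fixes a b s :: int
  assumes "0 < a" "0 < b" and square: "(a * b)^2 - 16 * (4 * a + b) = s^2"
  shows "(5 * a - 4) * (5 * b - 16) \<le> 189 \<or> (\<exists>h\<in>{1..4}. h * a * b - h^2 = 16 * a + 4 * b)"
proof -
  obtain d where d: "1 \<le> d" "d \<le> a * b" and gap: "d * (2 * (a * b) - d) = 16 * (4 * a + b)"
    using square_root_gap[OF _ _ square] assms(1,2) by auto
  show ?thesis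
  proof (cases "10 \<le> d")
    case True
    then have "10 * (2 * (a * b) - 10) \<le> 16 * (4 * a + b)"
      using parabola_mono[of 10 d "a * b"] d gap by simp
    then have "(5 * a - 4) * (5 * b - 16) \<le> 189"
      by (simp add: algebra_simps)
    then show ?thesis ..
  next
    case False
    have "even (d * (2 * (a * b) - d))"
      using gap by simp
    then obtain h where "d = 2 * h"
      by auto
    then have "h \<in> {1..4}" and "h * a * b - h^2 = 16 * a + 4 * b"
      using d False gap by (auto simp: algebra_simps power2_eq_square)
    then show ?thesis by blast
  qed
qed

lemma scaled_square_product_search:
  fixes A N X Y p q x y :: int
  assumes "0 < A" "N \<noteq> 0" "0 \<le> X" "0 \<le> Y"
    and "\<bar>N\<bar> + p < A * (X + 1)^2" "\<bar>N\<bar> + q < A * (Y + 1)^2"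
    and search: "\<forall>x\<in>{1..X}. \<forall>y\<in>{1..Y}. (A * x^2 - p) * (A * y^2 - q) \<noteq> N"
    and "0 < x" "0 < y"
  shows "(A * x^2 - p) * (A * y^2 - q) \<noteq> N"
proof
  assume eq: "(A * x^2 - p) * (A * y^2 - q) = N"
  then have "A * x^2 - p dvd N" "A * y^2 - q dvd N"
    by (metis dvd_triv_left, metis dvd_triv_right)
  then have "\<bar>A * x^2 - p\<bar> \<le> \<bar>N\<bar>" "\<bar>A * y^2 - q\<bar> \<le> \<bar>N\<bar>"
    using dvd_imp_le_int \<open>N \<noteq> 0\<close> by blast+
  then have "A * x^2 < A * (X + 1)^2" "A * y^2 < A * (Y + 1)^2"
    using assms(5,6) by linarith+
  then have "x^2 < (X + 1)^2" "y^2 < (Y + 1)^2"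
    using \<open>0 < A\<close> by (auto simp: mult_less_cancel_left_pos)
  then have "x \<in> {1..X}" "y \<in> {1..Y}"
    using assms(3,4,8,9) power2_less_imp_less[of x "X + 1"] power2_less_imp_less[of y "Y + 1"] by auto
  then show False
    using search eq by blast
qed

lemma small_gap_factored:
  fixes h a b :: "'a::comm_ring_1"
  assumes "h * a * b - h^2 = 16 * a + 4 * b"
  shows "(h * a - 4) * (h * b - 16) = h^3 + 64"
proof -
  have "(h * a - 4) * (h * b - 16) = h * (h * a * b - 16 * a - 4 * b) + 64"
    by (simp add: algebra_simps)
  also have "\<dots> = h^3 + 64"
    using assms by (simp add: algebra_simps power2_eq_square power3_eq_cube)
  finally show ?thesis .
qed

lemma small_gap_impossible:
  fixes h k \<mu> n :: int
  assumes "h \<in> {1..4}" "0 < k" "odd k" "0 < \<mu>" "0 < n"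
  shows "h * (k * \<mu>^2) * (k * n^2) - h^2 \<noteq> 16 * (k * \<mu>^2) + 4 * (k * n^2)"
proof
  assume gap: "h * (k * \<mu>^2) * (k * n^2) - h^2 = 16 * (k * \<mu>^2) + 4 * (k * n^2)"
  have factored: "(h * k * \<mu>^2 - 4) * (h * k * n^2 - 16) = h^3 + 64"
    using small_gap_factored[OF gap] by (simp add: mult.assoc)
  note search = scaled_square_product_search[where p = 4 and q = 16 and x = \<mu> and y = n]
  have "h^2 = k * (h * k * \<mu>^2 * n^2 - 16 * \<mu>^2 - 4 * n^2)"
    using gap by (simp add: algebra_simps power2_eq_square)
  then have "k dvd h^2"
    by (metis dvd_triv_left)
  moreover from this have "k \<in> {1..h^2}"
    using assms(1,2) by (auto intro: zdvd_imp_le)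
  moreover have "\<forall>h\<in>{1..4::int}. \<forall>k\<in>{1..h^2}. odd k \<and> k dvd h^2 \<longrightarrow>
      (h, k) \<in> {(1, 1), (2, 1), (3, 1), (3, 3), (3, 9), (4, 1)}"
    by (simp flip: set_upto add: upto_rec1)
  ultimately consider "h = 1" "k = 1" | "h = 2" "k = 1" | "h = 3" "k = 1" | "h = 3" "k = 3"
    | "h = 3" "k = 9" | "h = 4" "k = 1"
    using assms(1,3) by blast
  then show False
  proof cases
    case 1
    then show False
      using factored search[of 1 65 8 9] assms(4,5) by (simp flip: set_upto add: upto_rec1)
  next
    case 2
    then show False
      using factored search[of 2 72 6 6] assms(4,5) by (simp flip: set_upto add: upto_rec1)
  next
    case 3
    then show False
      using factored search[of 3 91 5 5] assms(4,5) by (simp flip: set_upto add: upto_rec1)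
  next
    case 4
    then show False
      using factored search[of 9 91 3 3] assms(4,5) by (simp flip: set_upto add: upto_rec1)
  next
    case 5
    then show False
      using factored search[of 27 91 1 1] assms(4,5) by (simp flip: set_upto add: upto_rec1)
  next
    case 6
    then show False
      using factored search[of 4 128 5 6] assms(4,5) by (simp flip: set_upto add: upto_rec1)
  qed
qed

theorem lemma7:
  fixes k \<mu> n s :: int
  assumes "k > 0" and "odd k" and "\<mu> > 0" and "n > 0"
    and "k^4 * \<mu>^4 * n^4 - 16 * k * (4 * \<mu>^2 + n^2) = s^2"
  shows "(5 * k * \<mu>^2 - 4) * (5 * k * n^2 - 16) \<le> 189"
proof -
  define a b where "a = k * \<mu>^2" and "b = k * n^2"
  have "0 < a" "0 < b"
    using assms(1,3,4) by (simp_all add: a_def b_def)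
  moreover have "(a * b)^2 - 16 * (4 * a + b) = s^2"
    using assms(5) by (simp add: a_def b_def algebra_simps power_mult_distrib flip: power_mult)
  ultimately have "(5 * a - 4) * (5 * b - 16) \<le> 189 \<or> (\<exists>h\<in>{1..4}. h * a * b - h^2 = 16 * a + 4 * b)"
    by (rule square_condition_bound_or_small_gap)
  moreover have "\<not> (\<exists>h\<in>{1..4}. h * a * b - h^2 = 16 * a + 4 * b)"
    using small_gap_impossible assms(1-4) by (simp add: a_def b_def)
  ultimately show ?thesis
    by (simp add: a_def b_def mult.assoc)
qed

end
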